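(* Let $L_1,L_2$ be positive integers that are both multiples of $4$. Consider the honeycomb lattice on the $L_1\times L_2$ torus: sites $A(\bm R),B(\bm R)$ with $\bm R=m_1\bm a_1+m_2\bm a_2$, $m_\mu\in\mathbb Z/L_\mu\mathbb Z$, and bonds $A(\bm R)$–$B(\bm R)$ of type $c$, $A(\bm R)$–$B(\bm R-\bm a_1)$ of type $a$, $A(\bm R)$–$B(\bm R-\bm a_2)$ of type $b$. Assign to every bond of type $\alpha$ the link matrix $U_{ij}=U_{ji}=U^\alpha$ with $U^a=\tau^y\otimes I_2$, $U^b=-\tau^x\otimes\sigma^z$, $U^c=-\tau^x\otimes\sigma^y$. Let $C_1$ be the noncontractible loop $A(\bm 0)\to B(\bm 0)\to A(\bm a_1)\to B(\bm a_1)\to\cdots\to A(L_1\bm a_1)=A(\bm 0)$ (alternating $c$- and $a$-bonds) and $C_2$ the noncontractible loop $A(\bm 0)\to B(\bm 0)\to A(\bm a_2)\to\cdots\to A(\bm 0)$ (alternating $c$- and $b$-bonds). Then the ordered products of link matrices along $C_1$ and along $C_2$ both equal $I_4$, every elementary hexagon has product $-I_4$, and there exist unitary matrices $g_j$ and signs $\eta_{ij}=\eta_{ji}\in\{\pm1\}$ with $g_iU_{ij}g_j^\dagger=\eta_{ij}I_4$ for every bond of the torus, such that the Hubbard model $-\frac{t}{\sqrt3}\sum_{\langle ij\rangle}\psi_i^\dagger U_{ij}\psi_j+h.c.+\frac U2\sum_j\psi_j^\dagger\psi_j(\psi_j^\dagger\psi_j-1)$ is mapped by $\psi_j\to g_j\psi_j$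 to an explicitly $\mathrm{SU}(4)$-symmetric $\pi$-flux Hubbard model with $\prod_{\langle ij\rangle\in p}\eta_{ij}=-1$ for every hexagon $p$ and $\prod_{\langle ij\rangle\in C_\mu}\eta_{ij}=+1$ for $\mu=1,2$.
   Context: Pauli matrices $\boldsymbol\tau$ act on the first and $\boldsymbol\sigma$ on the second factor of $\mathbb C^2\otimes\mathbb C^2$; $t,U$ are real; $\psi_j$ are four-component fermionic spinors. A gauge transformation acts by $\psi_j\to g_j\psi_j$, $U_{ij}\to g_iU_{ij}g_j^\dagger$. *)

theory Defs
  imports Complex_Main "Jordan_Normal_Form.Schur_Decomposition"
begin

definition pauli_x :: "complex mat" where
  "pauli_x = mat_of_rows_list 2 [[0, 1], [1, 0]]"
definition pauli_y :: "complex mat" where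
  "pauli_y = mat_of_rows_list 2 [[0, - \<i>], [\<i>, 0]]"
definition pauli_z :: "complex mat" where
  "pauli_z = mat_of_rows_list 2 [[1, 0], [0, -1]]"

definition kron :: "complex mat \<Rightarrow> complex mat \<Rightarrow> complex mat" where
  "kron A B = mat (dim_row A * dim_row B) (dim_col A * dim_col B)
     (\<lambda>(i, j). A $$ (i div dim_row B, j div dim_col B) * B $$ (i mod dim_row B, j mod dim_col B))"

definition Ua :: "complex mat" where "Ua = kron pauli_y (1\<^sub>m 2)"
definition Ub :: "complex mat" where "Ub = - kron pauli_x pauli_z"
definition Uc :: "complex mat" where "Uc = - kron pauli_x pauli_y"

definition unitary4 :: "complex mat \<Rightarrow> bool" where
  "unitary4 g \<longleftrightarrow> g \<in> carrier_mat 4 4 \<and> g * mat_adjoint g = 1\<^sub>m 4 \<and> mat_adjoint g * g = 1\<^sub>m 4"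

datatype sublat = SA | SB
datatype btype = Ta | Tb | Tc

text \<open>A site is (sublattice, m1, m2) with m_mu taken modulo L_mu (representative in [0, L_mu)).\<close>
type_synonym site = "sublat \<times> int \<times> int"

definition siteA :: "nat \<Rightarrow> nat \<Rightarrow> int \<Rightarrow> int \<Rightarrow> site" where
  "siteA L1 L2 m1 m2 = (SA, m1 mod int L1, m2 mod int L2)"
definition siteB :: "nat \<Rightarrow> nat \<Rightarrow> int \<Rightarrow> int \<Rightarrow> site" where
  "siteB L1 L2 m1 m2 = (SB, m1 mod int L1, m2 mod int L2)"

definition is_bond :: "nat \<Rightarrow> nat \<Rightarrow> btype \<Rightarrow> site \<Rightarrow> site \<Rightarrow> bool" where
  "is_bond L1 L2 \<alpha> i j \<longleftrightarrow> (\<exists>m1 m2.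
     let a = siteA L1 L2 m1 m2;
         b = (case \<alpha> of Tc \<Rightarrow> siteB L1 L2 m1 m2
                      | Ta \<Rightarrow> siteB L1 L2 (m1 - 1) m2
                      | Tb \<Rightarrow> siteB L1 L2 m1 (m2 - 1))
     in (i = a \<and> j = b) \<or> (i = b \<and> j = a))"

definition bond :: "nat \<Rightarrow> nat \<Rightarrow> site \<Rightarrow> site \<Rightarrow> bool" where
  "bond L1 L2 i j \<longleftrightarrow> (\<exists>\<alpha>. is_bond L1 L2 \<alpha> i j)"

definition Umat :: "btype \<Rightarrow> complex mat" where
  "Umat \<alpha> = (case \<alpha> of Ta \<Rightarrow> Ua | Tb \<Rightarrow> Ub | Tc \<Rightarrow> Uc)"

definition path_prod :: "(site \<Rightarrow> site \<Rightarrow> complex mat) \<Rightarrow> site list \<Rightarrow> complex mat" where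
  "path_prod U p = foldr (\<lambda>(i, j) acc. U i j * acc) (zip p (tl p)) (1\<^sub>m 4)"

definition path_sign :: "(site \<Rightarrow> site \<Rightarrow> int) \<Rightarrow> site list \<Rightarrow> int" where
  "path_sign \<eta> p = prod_list (map (\<lambda>(i, j). \<eta> i j) (zip p (tl p)))"

definition loopC1 :: "nat \<Rightarrow> nat \<Rightarrow> site list" where
  "loopC1 L1 L2 = concat (map (\<lambda>k. [siteA L1 L2 (int k) 0, siteB L1 L2 (int k) 0]) [0..<L1])
                  @ [siteA L1 L2 0 0]"

definition loopC2 :: "nat \<Rightarrow> nat \<Rightarrow> site list" where
  "loopC2 L1 L2 = concat (map (\<lambda>k. [siteA L1 L2 0 (int k), siteB L1 L2 0 (int k)]) [0..<L2])
                  @ [siteA L1 L2 0 0]"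

text \<open>Elementary hexagon attached to the unit cell R = (m1, m2):
  A(R) -c- B(R) -a- A(R+a1) -b- B(R+a1-a2) -c- A(R+a1-a2) -a- B(R-a2) -b- A(R).
  Every elementary hexagon of the torus is of this form for exactly one R.\<close>
definition hexagon :: "nat \<Rightarrow> nat \<Rightarrow> int \<Rightarrow> int \<Rightarrow> site list" where
  "hexagon L1 L2 m1 m2 =
     [siteA L1 L2 m1 m2, siteB L1 L2 m1 m2, siteA L1 L2 (m1 + 1) m2,
      siteB L1 L2 (m1 + 1) (m2 - 1), siteA L1 L2 (m1 + 1) (m2 - 1),
      siteB L1 L2 m1 (m2 - 1), siteA L1 L2 m1 m2]"

end

theory Submission
  imports Defs
begin

text \<open>
  With Va = \<tau>z \<otimes> \<sigma>y and Vb = 1 \<otimes> \<sigma>x one has Ua Uc = \<i> Va, Ub Uc = - \<i> Vb and Uc Uc = 1,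
  where Va and Vb are anticommuting Hermitian involutions. The gauge
  g(A(R)) = \<i>^(m1 + m2) Va^m1 Vb^m2, g(B(R)) = g(A(R)) Uc is well defined on the torus because
  4 divides L1 and L2. It turns every c- and b-link into 1 and the a-link in row m2 into
  -(-1)^m2, the sign coming from moving Va past Vb^m2. So \<eta> = -1 exactly on the a-bonds of
  even rows: a hexagon contains a-bonds of two consecutive rows, C1 contains L1 a-bonds of row 0
  and C2 none. Finally, g i U i j (g j)\<dagger> = \<eta> i j telescopes along a closed path, so the product
  of the U along it is conjugate to the product of the signs.
\<close>

lemma less_4_cases: "(i::nat) < 4 \<Longrightarrow> i = 0 \<or> i = 1 \<or> i = 2 \<or> i = 3"
  by auto

lemma mat_of_rows_list4_mult:
  "mat_of_rows_list 4 [[a00, a01, a02, a03], [a10, a11, a12, a13], [a20, a21, a22, a23], [a30, a31, a32, a33]]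
   * mat_of_rows_list 4 [[b00, b01, b02, b03], [b10, b11, b12, b13], [b20, b21, b22, b23], [b30, b31, b32, b33]]
 = mat_of_rows_list 4
    [[a00 * b00 + a01 * b10 + a02 * b20 + a03 * b30, a00 * b01 + a01 * b11 + a02 * b21 + a03 * b31,
      a00 * b02 + a01 * b12 + a02 * b22 + a03 * b32, a00 * b03 + a01 * b13 + a02 * b23 + a03 * b33],
     [a10 * b00 + a11 * b10 + a12 * b20 + a13 * b30, a10 * b01 + a11 * b11 + a12 * b21 + a13 * b31,
      a10 * b02 + a11 * b12 + a12 * b22 + a13 * b32, a10 * b03 + a11 * b13 + a12 * b23 + a13 * b33],
     [a20 * b00 + a21 * b10 + a22 * b20 + a23 * b30, a20 * b01 + a21 * b11 + a22 * b21 + a23 * b31,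
      a20 * b02 + a21 * b12 + a22 * b22 + a23 * b32, a20 * b03 + a21 * b13 + a22 * b23 + a23 * b33],
     [a30 * b00 + a31 * b10 + a32 * b20 + a33 * b30, a30 * b01 + a31 * b11 + a32 * b21 + a33 * b31,
      a30 * b02 + a31 * b12 + a32 * b22 + a33 * b32, a30 * b03 + a31 * b13 + a32 * b23 + a33 * b33]]"
  by (rule eq_matI)
    (auto simp: mat_of_rows_list_def scalar_prod_def less_Suc_eq numeral_eq_Suc sum.atLeast0_lessThan_Suc)

lemma mat_of_rows_list4_adjoint:
  "mat_adjoint (mat_of_rows_list 4
     [[a00, a01, a02, a03], [a10, a11, a12, a13], [a20, a21, a22, a23], [a30, a31, a32, a33]])
 = mat_of_rows_list 4 [[cnj a00, cnj a10, cnj a20, cnj a30], [cnj a01, cnj a11, cnj a21, cnj a31],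
                       [cnj a02, cnj a12, cnj a22, cnj a32], [cnj a03, cnj a13, cnj a23, cnj a33]]"
  by (rule eq_matI) (auto simp: mat_adjoint_def mat_of_rows_list_def mat_of_rows_def less_Suc_eq numeral_eq_Suc)

lemma mat_of_rows_list4_smult:
  "(c::complex) \<cdot>\<^sub>m mat_of_rows_list 4
     [[a00, a01, a02, a03], [a10, a11, a12, a13], [a20, a21, a22, a23], [a30, a31, a32, a33]]
 = mat_of_rows_list 4 [[c * a00, c * a01, c * a02, c * a03], [c * a10, c * a11, c * a12, c * a13],
                       [c * a20, c * a21, c * a22, c * a23], [c * a30, c * a31, c * a32, c * a33]]"
  by (rule eq_matI) (auto simp: mat_of_rows_list_def less_Suc_eq numeral_eq_Suc)

lemma mat_of_rows_list4_uminus: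
  "- mat_of_rows_list 4
     [[a00, a01, a02, a03], [a10, a11, a12, a13], [a20, a21, a22, a23], [a30, a31, a32, a33]]
 = (mat_of_rows_list 4 [[- a00, - a01, - a02, - a03], [- a10, - a11, - a12, - a13],
                        [- a20, - a21, - a22, - a23], [- a30, - a31, - a32, - a33]] :: complex mat)"
  by (rule eq_matI) (auto simp: mat_of_rows_list_def less_Suc_eq numeral_eq_Suc)

lemma one_mat4_explicit:
  "(1\<^sub>m 4 :: complex mat) = mat_of_rows_list 4 [[1, 0, 0, 0], [0, 1, 0, 0], [0, 0, 1, 0], [0, 0, 0, 1]]"
  by (rule eq_matI) (auto simp: mat_of_rows_list_def less_Suc_eq numeral_eq_Suc)

lemma mat_of_rows_list4_carrier:
  "mat_of_rows_list 4 [[a00, a01, a02, a03], [a10, a11, a12, a13], [a20, a21, a22, a23], [a30, a31, a32, a33]]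
   \<in> carrier_mat 4 4"
  unfolding mat_of_rows_list_def carrier_mat_def by (simp add: eval_nat_numeral)

lemma one_mat2_explicit: "(1\<^sub>m 2 :: complex mat) = mat_of_rows_list 2 [[1, 0], [0, 1]]"
  by (rule eq_matI) (auto simp: mat_of_rows_list_def numeral_2_eq_2 less_Suc_eq)

lemma kron_mat_of_rows_list2:
  "kron (mat_of_rows_list 2 [[a00, a01], [a10, a11]]) (mat_of_rows_list 2 [[b00, b01], [b10, b11]])
 = mat_of_rows_list 4
    [[a00 * b00, a00 * b01, a01 * b00, a01 * b01], [a00 * b10, a00 * b11, a01 * b10, a01 * b11],
     [a10 * b00, a10 * b01, a11 * b00, a11 * b01], [a10 * b10, a10 * b11, a11 * b10, a11 * b11]]"
  by (rule eq_matI)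
    (auto simp: kron_def mat_of_rows_list_def numeral_2_eq_2[symmetric] dest!: less_4_cases)

lemma Ua_explicit: "Ua = mat_of_rows_list 4 [[0, 0, - \<i>, 0], [0, 0, 0, - \<i>], [\<i>, 0, 0, 0], [0, \<i>, 0, 0]]"
  by (simp add: Ua_def pauli_y_def one_mat2_explicit kron_mat_of_rows_list2)

lemma Ub_explicit: "Ub = mat_of_rows_list 4 [[0, 0, -1, 0], [0, 0, 0, 1], [-1, 0, 0, 0], [0, 1, 0, 0]]"
  by (simp add: Ub_def pauli_x_def pauli_z_def kron_mat_of_rows_list2 mat_of_rows_list4_uminus)

lemma Uc_explicit: "Uc = mat_of_rows_list 4 [[0, 0, 0, \<i>], [0, 0, - \<i>, 0], [0, \<i>, 0, 0], [- \<i>, 0, 0, 0]]"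
  by (simp add: Uc_def pauli_x_def pauli_y_def kron_mat_of_rows_list2 mat_of_rows_list4_uminus)

lemma Umat_carrier: "Umat \<alpha> \<in> carrier_mat 4 4"
  by (cases \<alpha>) (simp_all add: Umat_def Ua_explicit Ub_explicit Uc_explicit mat_of_rows_list4_carrier)

lemma mat_adjoint_carrier [simp]: "A \<in> carrier_mat n m \<Longrightarrow> mat_adjoint A \<in> carrier_mat m n"
  unfolding mat_adjoint_def carrier_mat_def by simp

lemma one_smult_mat [simp]: "(1 :: 'a :: semiring_1) \<cdot>\<^sub>m A = A"
  by (rule eq_matI) simp_all

lemma minus_one_smult_mat: "(-1 :: 'a :: ring_1) \<cdot>\<^sub>m A = - A"
  by (rule eq_matI) auto

lemma smult_smult_mat: "a \<cdot>\<^sub>m (b \<cdot>\<^sub>m A) = (a * b :: 'a :: semigroup_mult) \<cdot>\<^sub>m A"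
  by (rule eq_matI) (auto simp: mult.assoc)

lemma smult_one_mult_smult_one:
  "(a \<cdot>\<^sub>m 1\<^sub>m n) * (b \<cdot>\<^sub>m 1\<^sub>m n) = (a * b :: 'a :: comm_ring_1) \<cdot>\<^sub>m 1\<^sub>m n"
proof -
  have "(a \<cdot>\<^sub>m 1\<^sub>m n) * (b \<cdot>\<^sub>m 1\<^sub>m n) = a \<cdot>\<^sub>m (1\<^sub>m n * (b \<cdot>\<^sub>m 1\<^sub>m n))"
    by (rule mult_smult_assoc_mat) auto
  also have "\<dots> = a \<cdot>\<^sub>m (b \<cdot>\<^sub>m 1\<^sub>m n)"
    by (subst left_mult_one_mat) auto
  finally show ?thesis
    by (simp add: smult_smult_mat)
qed

lemmas mat4_mult_assoc = assoc_mult_mat[of _ 4 4 _ 4 _ 4] mult_carrier_mat[of _ 4 4 _ 4]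

section \<open>Gauge transformations along paths\<close>

lemma path_prod_singleton [simp]: "path_prod U [i] = 1\<^sub>m 4"
  by (simp add: path_prod_def)

lemma path_prod_Cons_Cons [simp]: "path_prod U (i # j # p) = U i j * path_prod U (j # p)"
  by (simp add: path_prod_def)

lemma path_sign_singleton [simp]: "path_sign \<eta> [i] = 1"
  by (simp add: path_sign_def)

lemma path_sign_Cons_Cons [simp]: "path_sign \<eta> (i # j # p) = \<eta> i j * path_sign \<eta> (j # p)"
  by (simp add: path_sign_def)

lemma path_prod_carrier:
  assumes "\<And>i j. (i, j) \<in> set (zip p (tl p)) \<Longrightarrow> U i j \<in> carrier_mat 4 4"
  shows "path_prod U p \<in> carrier_mat 4 4"
  using assms
proof (induction p rule: induct_list012)
  case 1
  then show ?case by (simp add: path_prod_def)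
next
  case (3 i j p)
  have "path_prod U (j # p) \<in> carrier_mat 4 4"
    by (rule "3.IH"(2)) (simp add: "3.prems")
  then show ?case using "3.prems"[of i j] by simp
qed simp

lemma path_prod_gauge_transform:
  assumes unitary: "\<And>j. unitary4 (g j)"
    and links: "\<And>i j. (i, j) \<in> set (zip p (tl p)) \<Longrightarrow>
          U i j \<in> carrier_mat 4 4 \<and> g i * U i j * mat_adjoint (g j) = of_int (\<eta> i j) \<cdot>\<^sub>m 1\<^sub>m 4"
    and "p \<noteq> []"
  shows "g (hd p) * path_prod U p * mat_adjoint (g (last p)) = of_int (path_sign \<eta> p) \<cdot>\<^sub>m 1\<^sub>m 4"
  using links \<open>p \<noteq> []\<close>
proof (induction p rule: induct_list012)
  case (2 i)
  then show ?case using unitary by (simp add: unitary4_def right_mult_one_mat[of _ 4 4])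
next
  case (3 i j p)
  have g: "g k \<in> carrier_mat 4 4" "mat_adjoint (g k) \<in> carrier_mat 4 4" for k
    using unitary by (simp_all add: unitary4_def)
  have U: "U i j \<in> carrier_mat 4 4"
    and link: "g i * U i j * mat_adjoint (g j) = of_int (\<eta> i j) \<cdot>\<^sub>m 1\<^sub>m 4"
    using "3.prems"(1)[of i j] by simp_all
  have tail_links: "U a b \<in> carrier_mat 4 4 \<and> g a * U a b * mat_adjoint (g b) = of_int (\<eta> a b) \<cdot>\<^sub>m 1\<^sub>m 4"
    if "(a, b) \<in> set (zip (j # p) (tl (j # p)))" for a b
    using "3.prems"(1)[of a b] that by simp
  have P: "path_prod U (j # p) \<in> carrier_mat 4 4"
    using tail_links by (intro path_prod_carrier) blast
  have IH: "g j * path_prod U (j # p) * mat_adjoint (g (last (j # p)))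
      = of_int (path_sign \<eta> (j # p)) \<cdot>\<^sub>m 1\<^sub>m 4"
    using "3.IH"(2)[OF tail_links] by simp
  have "mat_adjoint (g j) * g j = 1\<^sub>m 4"
    using unitary by (simp add: unitary4_def)
  then have "g i * path_prod U (i # j # p) * mat_adjoint (g (last (i # j # p)))
      = g i * U i j * (mat_adjoint (g j) * g j) * path_prod U (j # p) * mat_adjoint (g (last (j # p)))"
    using U P g by (simp add: mat4_mult_assoc right_mult_one_mat[OF U])
  also have "\<dots> = (g i * U i j * mat_adjoint (g j))
                  * (g j * path_prod U (j # p) * mat_adjoint (g (last (j # p))))"
    using U P g by (simp add: mat4_mult_assoc)
  also have "\<dots> = of_int (path_sign \<eta> (i # j # p)) \<cdot>\<^sub>m 1\<^sub>m 4"
    unfolding link IH by (simp add: smult_one_mult_smult_one)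
  finally show ?case by simp
qed simp

lemma closed_path_prod_gauge:
  assumes unitary: "\<And>j. unitary4 (g j)"
    and links: "\<And>i j. (i, j) \<in> set (zip p (tl p)) \<Longrightarrow>
          U i j \<in> carrier_mat 4 4 \<and> g i * U i j * mat_adjoint (g j) = of_int (\<eta> i j) \<cdot>\<^sub>m 1\<^sub>m 4"
    and "p \<noteq> []" and closed: "last p = hd p"
  shows "path_prod U p = of_int (path_sign \<eta> p) \<cdot>\<^sub>m 1\<^sub>m 4"
proof -
  let ?g = "g (hd p)" and ?P = "path_prod U p" and ?s = "of_int (path_sign \<eta> p) :: complex"
  have g: "?g \<in> carrier_mat 4 4" "mat_adjoint ?g \<in> carrier_mat 4 4"
    using unitary by (auto simp: unitary4_def)
  have P: "?P \<in> carrier_mat 4 4"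
    using links by (intro path_prod_carrier) auto
  have "?P = (mat_adjoint ?g * ?g) * ?P * (mat_adjoint ?g * ?g)"
    using unitary P by (simp add: unitary4_def right_mult_one_mat[OF P])
  also have "\<dots> = mat_adjoint ?g * (?g * ?P * mat_adjoint ?g) * ?g"
    using g P by (simp add: mat4_mult_assoc)
  also have "\<dots> = mat_adjoint ?g * (?s \<cdot>\<^sub>m 1\<^sub>m 4) * ?g"
    using path_prod_gauge_transform[of g p U \<eta>, OF unitary links \<open>p \<noteq> []\<close>] closed by simp
  also have "\<dots> = ?s \<cdot>\<^sub>m (mat_adjoint ?g * ?g)"
    using mult_smult_distrib[OF g(2) one_carrier_mat, of ?s] mult_smult_assoc_mat[OF g(2,1), of ?s]
      right_mult_one_mat[OF g(2)] by simp
  finally show ?thesis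
    using unitary by (simp add: unitary4_def)
qed

lemma zip_tl_append:
  "p \<noteq> [] \<Longrightarrow> zip (p @ q) (tl p @ q) = zip p (tl p) @ zip (last p # q) q"
  by (induction p rule: induct_list012) auto

lemma path_sign_append:
  "p \<noteq> [] \<Longrightarrow> path_sign \<eta> (p @ q) = path_sign \<eta> p * path_sign \<eta> (last p # q)"
  by (simp add: path_sign_def zip_tl_append)

definition alternating_path :: "(nat \<Rightarrow> 'a) \<Rightarrow> (nat \<Rightarrow> 'a) \<Rightarrow> nat \<Rightarrow> 'a list" where
  "alternating_path x y n = concat (map (\<lambda>k. [x k, y k]) [0..<n]) @ [x n]"

lemma alternating_path_0: "alternating_path x y 0 = [x 0]"
  by (simp add: alternating_path_def)

lemma alternating_path_Suc: "alternating_path x y (Suc n) = alternating_path x y n @ [y n, x (Suc n)]"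
  by (simp add: alternating_path_def)

lemma alternating_path_not_Nil: "alternating_path x y n \<noteq> []"
  by (simp add: alternating_path_def)

lemma hd_alternating_path: "hd (alternating_path x y n) = x 0"
  by (induction n) (simp_all add: alternating_path_0 alternating_path_Suc alternating_path_not_Nil)

lemma last_alternating_path: "last (alternating_path x y n) = x n"
  by (simp add: alternating_path_def)

lemma set_zip_tl_alternating_path:
  "set (zip (alternating_path x y n) (tl (alternating_path x y n)))
     = (\<Union>k<n. {(x k, y k), (y k, x (Suc k))})"
  by (induction n)
    (auto simp: alternating_path_0 alternating_path_Suc zip_tl_append last_alternating_path
      alternating_path_not_Nil lessThan_Suc)

lemma path_sign_alternating_path:
  "path_sign \<eta> (alternating_path x y n) = (\<Prod>k<n. \<eta> (x k) (y k) * \<eta> (y k) (x (Suc k)))"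
  by (induction n)
    (simp_all add: alternating_path_0 alternating_path_Suc path_sign_append
      last_alternating_path alternating_path_not_Nil)

section \<open>The gauge in one unit cell\<close>

definition Va :: "complex mat" where "Va = kron pauli_z pauli_y"

definition Vb :: "complex mat" where "Vb = kron (1\<^sub>m 2) pauli_x"

lemma Va_explicit: "Va = mat_of_rows_list 4 [[0, - \<i>, 0, 0], [\<i>, 0, 0, 0], [0, 0, 0, \<i>], [0, 0, - \<i>, 0]]"
  by (simp add: Va_def pauli_z_def pauli_y_def kron_mat_of_rows_list2)

lemma Vb_explicit: "Vb = mat_of_rows_list 4 [[0, 1, 0, 0], [1, 0, 0, 0], [0, 0, 0, 1], [0, 0, 1, 0]]"
  by (simp add: Vb_def pauli_x_def one_mat2_explicit kron_mat_of_rows_list2)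

lemma imaginary_unit_cube: "\<i> ^ 3 = - \<i>"
  by (simp add: power3_eq_cube)

definition gauge_cell :: "int \<Rightarrow> int \<Rightarrow> complex mat" where
  "gauge_cell m1 m2 = \<i> ^ nat ((m1 + m2) mod 4) \<cdot>\<^sub>m
     ((if even m1 then 1\<^sub>m 4 else Va) * (if even m2 then 1\<^sub>m 4 else Vb))"

lemmas gauge_cell_explicit = gauge_cell_def Ua_explicit Ub_explicit Uc_explicit Va_explicit Vb_explicit
  one_mat4_explicit mat_of_rows_list4_mult mat_of_rows_list4_adjoint mat_of_rows_list4_smult
  mat_of_rows_list4_uminus mat_of_rows_list4_carrier imaginary_unit_cube

lemma even_mod_iff: "even n \<Longrightarrow> even ((m::int) mod n) \<longleftrightarrow> even m"
  by (metis even_iff_mod_2_eq_zero mod_mod_cancel)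

lemma gauge_cell_cong_mod4:
  assumes "m1 mod 4 = n1 mod 4" and "m2 mod 4 = n2 mod 4"
  shows "gauge_cell m1 m2 = gauge_cell n1 n2"
proof -
  have "(m1 + m2) mod 4 = (n1 + n2) mod 4"
    using assms by (metis mod_add_cong)
  moreover have "even m1 = even n1" "even m2 = even n2"
    using assms even_mod_iff[of 4] by (metis even_numeral)+
  ultimately show ?thesis
    by (simp add: gauge_cell_def)
qed

lemma mod_4_cases: "(m::int) mod 4 \<in> {0, 1, 2, 3}"
  by auto

lemma gauge_cell_mod_4:
  "gauge_cell (m1 mod 4) (m2 mod 4) = gauge_cell m1 m2"
  "gauge_cell (m1 mod 4 - 1) (m2 mod 4) = gauge_cell (m1 - 1) m2"
  "gauge_cell (m1 mod 4) (m2 mod 4 - 1) = gauge_cell m1 (m2 - 1)"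
  by (rule gauge_cell_cong_mod4; simp add: mod_diff_left_eq)+

lemma gauge_cell_unitary:
  "unitary4 (gauge_cell m1 m2) \<and> unitary4 (gauge_cell m1 m2 * Uc)" (is "?P m1 m2")
proof -
  have "?P k1 k2" if "k1 \<in> {0, 1, 2, 3}" "k2 \<in> {0, 1, 2, 3}" for k1 k2
    using that by (auto simp: unitary4_def gauge_cell_explicit)
  from this[OF mod_4_cases mod_4_cases] show ?thesis
    by (simp only: gauge_cell_mod_4)
qed

lemma gauge_cell_c_link:
  "gauge_cell m1 m2 * Uc * mat_adjoint (gauge_cell m1 m2 * Uc) = 1\<^sub>m 4
 \<and> gauge_cell m1 m2 * Uc * Uc * mat_adjoint (gauge_cell m1 m2) = 1\<^sub>m 4" (is "?P m1 m2")
proof -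
  have "?P k1 k2" if "k1 \<in> {0, 1, 2, 3}" "k2 \<in> {0, 1, 2, 3}" for k1 k2
    using that by (auto simp: gauge_cell_explicit)
  from this[OF mod_4_cases mod_4_cases] show ?thesis
    by (simp only: gauge_cell_mod_4)
qed

lemma gauge_cell_a_link:
  "gauge_cell m1 m2 * Ua * mat_adjoint (gauge_cell (m1 - 1) m2 * Uc) = (if even m2 then -1 else 1) \<cdot>\<^sub>m 1\<^sub>m 4
 \<and> gauge_cell (m1 - 1) m2 * Uc * Ua * mat_adjoint (gauge_cell m1 m2) = (if even m2 then -1 else 1) \<cdot>\<^sub>m 1\<^sub>m 4"
  (is "?P m1 m2")
proof -
  have "?P k1 k2" if "k1 \<in> {0, 1, 2, 3}" "k2 \<in> {0, 1, 2, 3}" for k1 k2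
    using that by (auto simp: gauge_cell_explicit)
  from this[OF mod_4_cases mod_4_cases] show ?thesis
    using even_mod_iff[of 4 m2] by (simp only: gauge_cell_mod_4) simp
qed

lemma gauge_cell_b_link:
  "gauge_cell m1 m2 * Ub * mat_adjoint (gauge_cell m1 (m2 - 1) * Uc) = 1\<^sub>m 4
 \<and> gauge_cell m1 (m2 - 1) * Uc * Ub * mat_adjoint (gauge_cell m1 m2) = 1\<^sub>m 4" (is "?P m1 m2")
proof -
  have "?P k1 k2" if "k1 \<in> {0, 1, 2, 3}" "k2 \<in> {0, 1, 2, 3}" for k1 k2
    using that by (auto simp: gauge_cell_explicit)
  from this[OF mod_4_cases mod_4_cases] show ?thesis
    by (simp only: gauge_cell_mod_4)
qed

lemma torus_size_bounds:
  fixes L :: nat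
  assumes "0 < L" and "4 dvd L"
  shows "1 < L" and "even L"
  using assms dvd_imp_le[of 4 L] dvd_trans[of 2 4 L] by auto

lemma mod_succ_neq:
  assumes "1 < L"
  shows "(m + 1) mod L \<noteq> (m::int) mod L"
proof
  assume "(m + 1) mod L = m mod L"
  then have "L dvd (m + 1) - m"
    by (simp only: mod_eq_dvd_iff)
  with assms show False
    using zdvd_imp_le[of L 1] by simp
qed

definition site_gauge :: "site \<Rightarrow> complex mat" where
  "site_gauge = (\<lambda>(s, m1, m2). case s of SA \<Rightarrow> gauge_cell m1 m2 | SB \<Rightarrow> gauge_cell m1 m2 * Uc)"

lemma gauge_cell_mod_torus:
  assumes "4 dvd L1" and "4 dvd L2"
  shows "gauge_cell (m1 mod int L1) (m2 mod int L2) = gauge_cell m1 m2"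
proof (rule gauge_cell_cong_mod4)
  have "(4::int) dvd int L1" "(4::int) dvd int L2"
    using assms by presburger+
  then show "m1 mod int L1 mod 4 = m1 mod 4" "m2 mod int L2 mod 4 = m2 mod 4"
    by (simp_all add: mod_mod_cancel)
qed

lemma site_gauge_siteA:
  "4 dvd L1 \<Longrightarrow> 4 dvd L2 \<Longrightarrow> site_gauge (siteA L1 L2 m1 m2) = gauge_cell m1 m2"
  by (simp add: site_gauge_def siteA_def gauge_cell_mod_torus)

lemma site_gauge_siteB:
  "4 dvd L1 \<Longrightarrow> 4 dvd L2 \<Longrightarrow> site_gauge (siteB L1 L2 m1 m2) = gauge_cell m1 m2 * Uc"
  by (simp add: site_gauge_def siteB_def gauge_cell_mod_torus)

lemma site_gauge_unitary: "unitary4 (site_gauge i)"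
  using gauge_cell_unitary by (cases i rule: prod_cases3) (auto simp: site_gauge_def split: sublat.split)

text \<open>For L1, L2 > 1 the only bonds joining sites in the same row m2 but different columns m1
  are the a-bonds (c-bonds stay in one cell, b-bonds change the row), so \<eta> is -1 exactly on the
  a-bonds of even rows.\<close>

definition link_sign :: "site \<Rightarrow> site \<Rightarrow> int" where
  "link_sign = (\<lambda>(s, m1, m2) (t, n1, n2). if m2 = n2 \<and> m1 \<noteq> n1 \<and> even m2 then -1 else 1)"

lemma link_sign_sym: "link_sign i j = link_sign j i"
  by (cases i rule: prod_cases3; cases j rule: prod_cases3) (auto simp: link_sign_def)

lemma link_sign_values: "link_sign i j \<in> {1, -1}"
  by (cases i rule: prod_cases3; cases j rule: prod_cases3) (simp add: link_sign_def)

lemma link_sign_c: "link_sign (siteA L1 L2 m1 m2) (siteB L1 L2 m1 m2) = 1"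
  by (simp add: link_sign_def siteA_def siteB_def)

lemma link_sign_a:
  assumes "1 < L1" and "even L2"
  shows "link_sign (siteA L1 L2 (m1 + 1) m2) (siteB L1 L2 m1 m2) = (if even m2 then -1 else 1)"
  using mod_succ_neq[of "int L1" m1] even_mod_iff[of "int L2" m2] assms
  by (simp add: link_sign_def siteA_def siteB_def)

lemma link_sign_b:
  assumes "1 < L2"
  shows "link_sign (siteA L1 L2 m1 (m2 + 1)) (siteB L1 L2 m1 m2) = 1"
  using mod_succ_neq[of "int L2" m2] assms by (simp add: link_sign_def siteA_def siteB_def)

lemma site_gauge_link:
  assumes "0 < L1" "0 < L2" "4 dvd L1" "4 dvd L2" and "is_bond L1 L2 \<alpha> i j"
  shows "site_gauge i * Umat \<alpha> * mat_adjoint (site_gauge j) = of_int (link_sign i j) \<cdot>\<^sub>m 1\<^sub>m 4"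
proof -
  note L1 = torus_size_bounds[OF assms(1,3)] and L2 = torus_size_bounds[OF assms(2,4)]
  note gauge = site_gauge_siteA[OF assms(3,4)] site_gauge_siteB[OF assms(3,4)]
  from assms(5) obtain m1 m2 where ends: "let a = siteA L1 L2 m1 m2;
         b = (case \<alpha> of Tc \<Rightarrow> siteB L1 L2 m1 m2
                      | Ta \<Rightarrow> siteB L1 L2 (m1 - 1) m2
                      | Tb \<Rightarrow> siteB L1 L2 m1 (m2 - 1))
     in (i = a \<and> j = b) \<or> (i = b \<and> j = a)"
    unfolding is_bond_def by blast
  show ?thesis
  proof (cases \<alpha>)
    case Ta
    have "link_sign (siteA L1 L2 m1 m2) (siteB L1 L2 (m1 - 1) m2) = (if even m2 then -1 else 1)"
      using link_sign_a[OF L1(1) L2(2), of "m1 - 1" m2] by simp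
    moreover note link_sign_sym[of "siteA L1 L2 m1 m2" "siteB L1 L2 (m1 - 1) m2"]
    ultimately show ?thesis
      using ends Ta gauge_cell_a_link[of m1 m2] by (auto simp: Let_def Umat_def gauge)
  next
    case Tb
    have "link_sign (siteA L1 L2 m1 m2) (siteB L1 L2 m1 (m2 - 1)) = 1"
      using link_sign_b[OF L2(1), of L1 m1 "m2 - 1"] by simp
    moreover note link_sign_sym[of "siteA L1 L2 m1 m2" "siteB L1 L2 m1 (m2 - 1)"]
    ultimately show ?thesis
      using ends Tb gauge_cell_b_link[of m1 m2] by (auto simp: Let_def Umat_def gauge)
  next
    case Tc
    note link_sign_c[of L1 L2 m1 m2] link_sign_sym[of "siteA L1 L2 m1 m2" "siteB L1 L2 m1 m2"]
    then show ?thesis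
      using ends Tc gauge_cell_c_link[of m1 m2] by (auto simp: Let_def Umat_def gauge)
  qed
qed

definition honeycomb_links :: "nat \<Rightarrow> nat \<Rightarrow> (site \<Rightarrow> site \<Rightarrow> complex mat) \<Rightarrow> bool" where
  "honeycomb_links L1 L2 U \<longleftrightarrow> (\<forall>\<alpha> i j. is_bond L1 L2 \<alpha> i j \<longrightarrow> U i j = Umat \<alpha>)"

lemma bond_link_gauge:
  assumes "0 < L1" "0 < L2" "4 dvd L1" "4 dvd L2" and "honeycomb_links L1 L2 U"
    and "bond L1 L2 i j"
  shows "U i j \<in> carrier_mat 4 4
       \<and> site_gauge i * U i j * mat_adjoint (site_gauge j) = of_int (link_sign i j) \<cdot>\<^sub>m 1\<^sub>m 4"
  using \<open>bond L1 L2 i j\<close> \<open>honeycomb_links L1 L2 U\<close> site_gauge_link[OF assms(1-4)] Umat_carrier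
  unfolding bond_def honeycomb_links_def by metis

lemma bond_sym: "bond L1 L2 i j \<Longrightarrow> bond L1 L2 j i"
  unfolding bond_def is_bond_def Let_def by blast

lemma bond_c: "bond L1 L2 (siteA L1 L2 m1 m2) (siteB L1 L2 m1 m2)"
  unfolding bond_def is_bond_def Let_def
  by (rule exI[of _ Tc], rule exI[of _ m1], rule exI[of _ m2]) simp

lemma bond_a: "bond L1 L2 (siteA L1 L2 (m1 + 1) m2) (siteB L1 L2 m1 m2)"
  unfolding bond_def is_bond_def Let_def
  by (rule exI[of _ Ta], rule exI[of _ "m1 + 1"], rule exI[of _ m2]) simp

lemma bond_b: "bond L1 L2 (siteA L1 L2 m1 (m2 + 1)) (siteB L1 L2 m1 m2)"
  unfolding bond_def is_bond_def Let_def
  by (rule exI[of _ Tb], rule exI[of _ m1], rule exI[of _ "m2 + 1"]) simp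

definition bond_path :: "nat \<Rightarrow> nat \<Rightarrow> site list \<Rightarrow> bool" where
  "bond_path L1 L2 p \<longleftrightarrow> (\<forall>(i, j) \<in> set (zip p (tl p)). bond L1 L2 i j)"

lemma closed_bond_path_prod:
  assumes "0 < L1" "0 < L2" "4 dvd L1" "4 dvd L2" and "honeycomb_links L1 L2 U"
    and "bond_path L1 L2 p" and "p \<noteq> []" and "last p = hd p"
  shows "path_prod U p = of_int (path_sign link_sign p) \<cdot>\<^sub>m 1\<^sub>m 4"
proof (rule closed_path_prod_gauge[where g = site_gauge, OF site_gauge_unitary _ assms(7,8)])
  fix i j
  assume "(i, j) \<in> set (zip p (tl p))"
  with \<open>bond_path L1 L2 p\<close> have "bond L1 L2 i j"
    unfolding bond_path_def by blast
  then show "U i j \<in> carrier_mat 4 4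
      \<and> site_gauge i * U i j * mat_adjoint (site_gauge j) = of_int (link_sign i j) \<cdot>\<^sub>m 1\<^sub>m 4"
    by (rule bond_link_gauge[OF assms(1-5)])
qed

section \<open>Fluxes through hexagons and noncontractible loops\<close>

lemma loopC1_alternating_path:
  "loopC1 L1 L2 = alternating_path (\<lambda>k. siteA L1 L2 (int k) 0) (\<lambda>k. siteB L1 L2 (int k) 0) L1"
  by (simp add: loopC1_def alternating_path_def siteA_def)

lemma loopC2_alternating_path:
  "loopC2 L1 L2 = alternating_path (\<lambda>k. siteA L1 L2 0 (int k)) (\<lambda>k. siteB L1 L2 0 (int k)) L2"
  by (simp add: loopC2_def alternating_path_def siteA_def)

lemma loopC1_closed: "loopC1 L1 L2 \<noteq> [] \<and> last (loopC1 L1 L2) = hd (loopC1 L1 L2)"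
  by (simp add: loopC1_alternating_path alternating_path_not_Nil hd_alternating_path
      last_alternating_path siteA_def)

lemma loopC2_closed: "loopC2 L1 L2 \<noteq> [] \<and> last (loopC2 L1 L2) = hd (loopC2 L1 L2)"
  by (simp add: loopC2_alternating_path alternating_path_not_Nil hd_alternating_path
      last_alternating_path siteA_def)

lemma hexagon_closed:
  "hexagon L1 L2 m1 m2 \<noteq> [] \<and> last (hexagon L1 L2 m1 m2) = hd (hexagon L1 L2 m1 m2)"
  by (simp add: hexagon_def)

lemma bond_path_loopC1: "bond_path L1 L2 (loopC1 L1 L2)"
proof -
  have "bond L1 L2 (siteB L1 L2 (int k) 0) (siteA L1 L2 (int (Suc k)) 0)" for k
    using bond_sym[OF bond_a[of L1 L2 "int k" 0]] by (simp add: add.commute)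
  then show ?thesis
    using bond_c by (auto simp: bond_path_def loopC1_alternating_path set_zip_tl_alternating_path)
qed

lemma bond_path_loopC2: "bond_path L1 L2 (loopC2 L1 L2)"
proof -
  have "bond L1 L2 (siteB L1 L2 0 (int k)) (siteA L1 L2 0 (int (Suc k)))" for k
    using bond_sym[OF bond_b[of L1 L2 0 "int k"]] by (simp add: add.commute)
  then show ?thesis
    using bond_c by (auto simp: bond_path_def loopC2_alternating_path set_zip_tl_alternating_path)
qed

lemma bond_path_hexagon: "bond_path L1 L2 (hexagon L1 L2 m1 m2)"
  using bond_c[of L1 L2 m1 m2] bond_sym[OF bond_a[of L1 L2 m1 m2]]
    bond_b[of L1 L2 "m1 + 1" "m2 - 1"] bond_sym[OF bond_c[of L1 L2 "m1 + 1" "m2 - 1"]]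
    bond_a[of L1 L2 m1 "m2 - 1"] bond_sym[OF bond_b[of L1 L2 m1 "m2 - 1"]]
  by (simp add: bond_path_def hexagon_def)

lemma path_sign_loopC1:
  assumes "1 < L1" and "even L1" and "even L2"
  shows "path_sign link_sign (loopC1 L1 L2) = 1"
proof -
  have "link_sign (siteA L1 L2 (int k) 0) (siteB L1 L2 (int k) 0)
      * link_sign (siteB L1 L2 (int k) 0) (siteA L1 L2 (int (Suc k)) 0) = -1" for k
    using link_sign_c link_sign_a[OF assms(1,3), of "int k" 0] link_sign_sym by (simp add: add.commute)
  then show ?thesis
    using assms(2) by (simp add: loopC1_alternating_path path_sign_alternating_path)
qed

lemma path_sign_loopC2:
  assumes "1 < L2"
  shows "path_sign link_sign (loopC2 L1 L2) = 1"
proof -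
  have "link_sign (siteA L1 L2 0 (int k)) (siteB L1 L2 0 (int k))
      * link_sign (siteB L1 L2 0 (int k)) (siteA L1 L2 0 (int (Suc k))) = 1" for k
    using link_sign_c link_sign_b[OF assms, of L1 0 "int k"] link_sign_sym by (simp add: add.commute)
  then show ?thesis
    by (simp add: loopC2_alternating_path path_sign_alternating_path)
qed

lemma path_sign_hexagon:
  assumes "1 < L1" and "1 < L2" and "even L2"
  shows "path_sign link_sign (hexagon L1 L2 m1 m2) = -1"
  using link_sign_c link_sign_a[OF assms(1,3)] link_sign_b[OF assms(2)]
    link_sign_a[OF assms(1,3), of m1 "m2 - 1"] link_sign_b[OF assms(2), of L1 m1 "m2 - 1"]
    link_sign_b[OF assms(2), of L1 "m1 + 1" "m2 - 1"] link_sign_sym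
  by (simp add: hexagon_def)

theorem mainTheorem4:
  fixes L1 L2 :: nat and U :: "site \<Rightarrow> site \<Rightarrow> complex mat"
  assumes "L1 > 0" and "L2 > 0" and "4 dvd L1" and "4 dvd L2"
    and links: "\<And>\<alpha> i j. is_bond L1 L2 \<alpha> i j \<Longrightarrow> U i j = Umat \<alpha>"
  shows "path_prod U (loopC1 L1 L2) = 1\<^sub>m 4
       \<and> path_prod U (loopC2 L1 L2) = 1\<^sub>m 4
       \<and> (\<forall>m1 m2. path_prod U (hexagon L1 L2 m1 m2) = - 1\<^sub>m 4)
       \<and> (\<exists>(g :: site \<Rightarrow> complex mat) (\<eta> :: site \<Rightarrow> site \<Rightarrow> int).
            (\<forall>j. unitary4 (g j))
          \<and> (\<forall>i j. bond L1 L2 i j \<longrightarrow>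
                 \<eta> i j = \<eta> j i \<and> \<eta> i j \<in> {1, -1}
               \<and> g i * U i j * mat_adjoint (g j) = of_int (\<eta> i j) \<cdot>\<^sub>m 1\<^sub>m 4)
          \<and> (\<forall>m1 m2. path_sign \<eta> (hexagon L1 L2 m1 m2) = -1)
          \<and> path_sign \<eta> (loopC1 L1 L2) = 1
          \<and> path_sign \<eta> (loopC2 L1 L2) = 1)"
proof -
  have "honeycomb_links L1 L2 U"
    using links by (simp add: honeycomb_links_def)
  note gauge = bond_link_gauge[OF assms(1-4) this]
    and wilson_loop = closed_bond_path_prod[OF assms(1-4) this]
  note L1 = torus_size_bounds[OF assms(1,3)] and L2 = torus_size_bounds[OF assms(2,4)]
  have sign_C1: "path_sign link_sign (loopC1 L1 L2) = 1"
    using path_sign_loopC1[OF L1 L2(2)] .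
  have sign_C2: "path_sign link_sign (loopC2 L1 L2) = 1"
    using path_sign_loopC2[OF L2(1)] .
  have sign_hexagon: "path_sign link_sign (hexagon L1 L2 m1 m2) = -1" for m1 m2
    using path_sign_hexagon[OF L1(1) L2] .
  have "path_prod U (loopC1 L1 L2) = 1\<^sub>m 4"
    using wilson_loop[OF bond_path_loopC1] loopC1_closed sign_C1 by simp
  moreover have "path_prod U (loopC2 L1 L2) = 1\<^sub>m 4"
    using wilson_loop[OF bond_path_loopC2] loopC2_closed sign_C2 by simp
  moreover have "path_prod U (hexagon L1 L2 m1 m2) = - 1\<^sub>m 4" for m1 m2
    using wilson_loop[OF bond_path_hexagon] hexagon_closed sign_hexagon
    by (simp add: minus_one_smult_mat)
  moreover have "\<forall>i j. bond L1 L2 i j \<longrightarrow> link_sign i j = link_sign j i \<and> link_sign i j \<in> {1, -1}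
      \<and> site_gauge i * U i j * mat_adjoint (site_gauge j) = of_int (link_sign i j) \<cdot>\<^sub>m 1\<^sub>m 4"
    using gauge link_sign_sym link_sign_values by blast
  ultimately show ?thesis
    using site_gauge_unitary sign_C1 sign_C2 sign_hexagon by blast
qed

end
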